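(* The tropicalization $\operatorname{trop}(\mathrm{PM}^+_n(\mathbb{R}))\subseteq\mathbb{R}^{2^{[n]}}$ of the image of the cone of $n\times n$ real symmetric positive definite matrices under the principal minor map is contained in the set of $M^\natural$-concave functions $2^{[n]}\to\mathbb{R}$.
   Context: $\mathrm{PM}^+_n(\mathbb{R})=\{(A_S)_{S\subseteq[n]} : A \text{ real symmetric positive definite } n\times n\}\subseteq\mathbb{R}_{+}^{2^{[n]}}$, where $A_S$ is the principal minor on rows/columns $S$ ($A_\emptyset=1$). For $\mathcal{S}\subseteq\mathbb{R}_+^N$, $\operatorname{trop}(\mathcal{S})=\lim_{t\to\infty}\{(\log_t x_1,\dots,\log_t x_N): x\in\mathcal{S}\}$ (logarithmic limit set). Vectors in $\mathbb{R}^{2^{[n]}}$ are regarded as functions $F:2^{[n]}\to\mathbb{R}$. $F$ is $M^\natural$-concave if for all $S,T\subseteq[n]$ and all $i\in S\setminus T$, either $F(S)+F(T)\le F(S\setminus\{i\})+F(T\cup\{i\})$, or there exists $j\in T\setminus S$ with $F(S)+F(T)\le F((S\setminus\{i\})\cup\{j\})+F((T\setminus\{j\})\cup\{i\})$. *)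

theory Defs
  imports "HOL-Analysis.Analysis"
begin

text \<open>The ground set [n] is modelled by a finite type 'n; real n x n matrices are
  real^'n^'n; points of R^(2^[n]) are functions 'n set => real.\<close>

definition pos_def_sym :: "real^'n^'n \<Rightarrow> bool" where
  "pos_def_sym A \<longleftrightarrow> transpose A = A \<and> (\<forall>x. x \<noteq> 0 \<longrightarrow> x \<bullet> (A *v x) > 0)"

text \<open>Principal minor A_S: determinant of the submatrix on rows/columns S
  (Leibniz formula over permutations of S, as for det in the library); A_{} = 1.\<close>
definition principal_minor :: "real^'n^'n \<Rightarrow> 'n set \<Rightarrow> real" where
  "principal_minor A S =
     (\<Sum>p \<in> {p. p permutes S}. of_int (sign p) * (\<Prod>i\<in>S. A $ i $ p i))"

definition PM_plus :: "('n::finite set \<Rightarrow> real) set" where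
  "PM_plus = {(\<lambda>S. principal_minor A S) | A. pos_def_sym A}"

text \<open>Logarithmic limit set: the (upper Kuratowski) limit of log_t(X) as t \<rightarrow> \<infinity>,
  i.e. the points w such that for every eps > 0 and every bound T there is t > T and
  x \<in> X with log_t x within eps of w (sup-norm on the finitely many coordinates).\<close>
definition trop :: "('a::finite \<Rightarrow> real) set \<Rightarrow> ('a \<Rightarrow> real) set" where
  "trop X = {w. \<forall>\<epsilon>>0. \<forall>T. \<exists>t>T. \<exists>x\<in>X. \<forall>a. \<bar>log t (x a) - w a\<bar> < \<epsilon>}"

definition M_natural_concave :: "('n set \<Rightarrow> real) \<Rightarrow> bool" where
  "M_natural_concave F \<longleftrightarrow>
     (\<forall>S T. \<forall>i \<in> S - T.
        F S + F T \<le> F (S - {i}) + F (T \<union> {i}) \<or>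
        (\<exists>j \<in> T - S. F S + F T \<le> F ((S - {i}) \<union> {j}) + F ((T - {j}) \<union> {i})))"

end

theory Submission
  imports Defs
begin

(* Adjoining an index i to X multiplies the principal minor of a positive definite A by the
   squared A-distance d(e_i, X) from e_i to the coordinate subspace of X (a Schur complement):
   A_(X+i) = A_X * d(e_i, X).  Let i in S - T, S' = S - i, m = |T - S|, and let p be the
   A-orthogonal projection of e_i onto the coordinate subspace of T.  Testing d(e_i, S') against
   a vector assembled from p gives
     d(e_i, S') <= 2^m * (sum_(j in T - S) p_j^2 d(e_j, S') + d(e_i, T)),
   while p_j^2 d(e_j, T - j) <= d(e_i, T - j).  So one of the m + 1 terms dominates, which yields
   A_S A_T <= K A_S' A_(T+i)  or  A_S A_T <= K A_(S'+j) A_(T-j+i)  for some j in T - S,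
   with K = 2^m (m + 1) independent of A.  Under log_t the constant K vanishes as t -> infinity,
   so every point of the tropicalization satisfies the exchange inequalities of M-natural
   concavity. *)

definition principal_padding :: "real^'n^'n \<Rightarrow> 'n set \<Rightarrow> real^'n^'n" where
  "principal_padding A X = (\<chi> k l. if k \<in> X \<and> l \<in> X then A$k$l else if k = l then 1 else 0)"

lemma principal_minor_eq_det_padding:
  fixes A :: "real^'n::finite^'n"
  shows "principal_minor A X = det (principal_padding A X)"
proof -
  let ?M = "principal_padding A X"
  have "det ?M = (\<Sum>p\<in>{p. p permutes X}. of_int (sign p) * (\<Prod>i\<in>UNIV. ?M $ i $ p i))"
    unfolding det_def
  proof (rule sum.mono_neutral_right)
    show "\<forall>p\<in>{p. p permutes UNIV} - {p. p permutes X}. of_int (sign p) * (\<Prod>i\<in>UNIV. ?M $ i $ p i) = 0"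
    proof
      fix p assume "p \<in> {p. p permutes UNIV} - {p. p permutes X}"
      then obtain k where "k \<notin> X" "p k \<noteq> k"
        unfolding permutes_def by blast
      then have "?M $ k $ p k = 0" by (simp add: principal_padding_def)
      then have "(\<Prod>i\<in>UNIV. ?M $ i $ p i) = 0" by (intro prod_zero) auto
      then show "of_int (sign p) * (\<Prod>i\<in>UNIV. ?M $ i $ p i) = 0" by simp
    qed
  qed (auto simp: finite_permutations permutes_subset)
  also have "\<dots> = (\<Sum>p\<in>{p. p permutes X}. of_int (sign p) * (\<Prod>i\<in>X. A $ i $ p i))"
  proof (rule sum.cong[OF refl])
    fix p assume "p \<in> {p. p permutes X}"
    then have p: "p permutes X" by simp
    have "(\<Prod>i\<in>UNIV. ?M $ i $ p i) = (\<Prod>i\<in>X. ?M $ i $ p i)"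
      using p by (intro prod.mono_neutral_right) (auto simp: principal_padding_def permutes_not_in)
    also have "\<dots> = (\<Prod>i\<in>X. A $ i $ p i)"
      using p by (intro prod.cong) (auto simp: principal_padding_def permutes_in_image)
    finally show "of_int (sign p) * (\<Prod>i\<in>UNIV. ?M $ i $ p i) = of_int (sign p) * (\<Prod>i\<in>X. A $ i $ p i)"
      by simp
  qed
  finally show ?thesis by (simp add: principal_minor_def)
qed

lemma det_cong_unit_row:
  fixes M N :: "'a::comm_ring_1^'n::finite^'n"
  assumes M: "M $ i = axis i 1" and N: "N $ i = axis i 1"
    and eq: "\<And>k l. l \<noteq> i \<Longrightarrow> N $ k $ l = M $ k $ l"
  shows "det N = det M"
  unfolding det_def
proof (rule sum.cong[OF refl])
  fix p assume "p \<in> {p. p permutes (UNIV::'n set)}"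
  then have p: "p permutes (UNIV::'n set)" by simp
  show "of_int (sign p) * (\<Prod>k\<in>UNIV. N $ k $ p k) = of_int (sign p) * (\<Prod>k\<in>UNIV. M $ k $ p k)"
  proof (cases "p i = i")
    case True
    have "N $ k $ p k = M $ k $ p k" for k
    proof (cases "k = i")
      case False
      then have "p k \<noteq> p i" using permutes_inj[OF p] by (auto dest: injD)
      then have "p k \<noteq> i" using True by simp
      then show ?thesis using eq by simp
    qed (use M N True in simp)
    then show ?thesis by simp
  next
    case False
    then have "N $ i $ p i = 0" "M $ i $ p i = 0" using M N by (auto simp: axis_def)
    then have "(\<Prod>k\<in>UNIV. N $ k $ p k) = 0" "(\<Prod>k\<in>UNIV. M $ k $ p k) = 0"
      by (auto intro!: prod_zero)
    then show ?thesis by simp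
  qed
qed

definition bform :: "real^'n^'n \<Rightarrow> real^'n \<Rightarrow> real^'n \<Rightarrow> real" where
  "bform A x y = x \<bullet> (A *v y)"

abbreviation qform :: "real^'n^'n \<Rightarrow> real^'n \<Rightarrow> real" where
  "qform A x \<equiv> bform A x x"

lemma bform_add_left: "bform A (x + y) z = bform A x z + bform A y z"
  by (simp add: bform_def inner_add_left)
lemma bform_add_right: "bform A z (x + y) = bform A z x + bform A z y"
  by (simp add: bform_def inner_add_right matrix_vector_right_distrib)
lemma bform_diff_left: "bform A (x - y) z = bform A x z - bform A y z"
  by (simp add: bform_def inner_diff_left)
lemma bform_diff_right: "bform A z (x - y) = bform A z x - bform A z y"
  by (simp add: bform_def inner_diff_right matrix_vector_mult_diff_distrib)
lemma bform_scaleR_left: "bform A (c *\<^sub>R x) z = c * bform A x z"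
  by (simp add: bform_def)
lemma bform_scaleR_right: "bform A z (c *\<^sub>R x) = c * bform A z x"
  by (simp add: bform_def matrix_vector_mult_scaleR)

lemma bform_zero_left [simp]: "bform A 0 y = 0"
  by (simp add: bform_def)

lemmas bform_bilinear = bform_add_left bform_add_right bform_diff_left bform_diff_right
  bform_scaleR_left bform_scaleR_right

lemma bform_commute:
  assumes "pos_def_sym A"
  shows "bform A x y = bform A y x"
proof -
  have "x v* A = x v* transpose A"
    using assms by (simp add: pos_def_sym_def)
  also have "\<dots> = A *v x"
    by (rule vector_transpose_matrix)
  finally show ?thesis
    by (metis bform_def dot_lmul_matrix inner_commute)
qed

lemma qform_pos: "pos_def_sym A \<Longrightarrow> x \<noteq> 0 \<Longrightarrow> qform A x > 0"
  by (simp add: pos_def_sym_def bform_def)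

lemma qform_nonneg: "pos_def_sym A \<Longrightarrow> qform A x \<ge> 0"
  using qform_pos[of A x] by (cases "x = 0") (auto simp: bform_def)

lemma qform_scaleR: "qform A (c *\<^sub>R x) = c\<^sup>2 * qform A x"
  by (simp add: bform_scaleR_left bform_scaleR_right power2_eq_square)

lemma qform_add_le:
  assumes A: "pos_def_sym A"
  shows "qform A (x + y) \<le> 2 * qform A x + 2 * qform A y"
proof -
  have "qform A (x + y) + qform A (x - y) = 2 * qform A x + 2 * qform A y"
    by (simp add: bform_bilinear)
  then show ?thesis using qform_nonneg[OF A, of "x - y"] by linarith
qed

lemma qform_sum_le:
  assumes A: "pos_def_sym A" and "finite K"
  shows "qform A ((\<Sum>k\<in>K. u k) + w) \<le> 2 ^ card K * ((\<Sum>k\<in>K. qform A (u k)) + qform A w)"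
  using \<open>finite K\<close>
proof (induction K arbitrary: w rule: finite_induct)
  case (insert k K)
  have "qform A ((\<Sum>k\<in>insert k K. u k) + w) = qform A (u k + ((\<Sum>k\<in>K. u k) + w))"
    using insert.hyps by (simp add: add.assoc)
  also have "\<dots> \<le> 2 * qform A (u k) + 2 * qform A ((\<Sum>k\<in>K. u k) + w)"
    by (rule qform_add_le[OF A])
  also have "\<dots> \<le> 2 * 2 ^ card K * qform A (u k) + 2 * (2 ^ card K * ((\<Sum>k\<in>K. qform A (u k)) + qform A w))"
  proof -
    have "qform A (u k) \<le> 2 ^ card K * qform A (u k)"
      using qform_nonneg[OF A, of "u k"] by (simp add: mult_le_cancel_right1)
    then show ?thesis using insert.IH[of w] by simp
  qed
  also have "\<dots> = 2 ^ card (insert k K) * ((\<Sum>k\<in>insert k K. qform A (u k)) + qform A w)"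
    using insert.hyps by (simp add: algebra_simps)
  finally show ?case .
qed simp

definition supported_on :: "'n set \<Rightarrow> (real^'n) set" where
  "supported_on X = {y. \<forall>k. k \<notin> X \<longrightarrow> y $ k = 0}"

lemma subspace_supported_on: "subspace (supported_on X)"
  by (auto simp: subspace_def supported_on_def)

lemma axis_in_supported_on: "k \<in> X \<Longrightarrow> axis k c \<in> supported_on X"
  by (simp add: supported_on_def axis_def)

lemma supported_on_mono: "X \<subseteq> Y \<Longrightarrow> supported_on X \<subseteq> supported_on Y"
  by (auto simp: supported_on_def)

lemma supported_on_empty: "supported_on {} = {0}"
  by (auto simp: supported_on_def vec_eq_iff)

lemma supported_on_insert_drop:
  "w \<in> supported_on (insert k X) \<Longrightarrow> w - axis k (w $ k) \<in> supported_on X"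
  by (auto simp: supported_on_def axis_def)

lemma supported_on_sum_axis:
  assumes "p \<in> supported_on X"
  shows "p = (\<Sum>t\<in>X. p $ t *\<^sub>R axis t 1)"
proof (rule vec_eq_iff[THEN iffD2, rule_format])
  fix l
  have "(\<Sum>t\<in>X. p $ t *\<^sub>R axis t (1::real)) $ l = (\<Sum>t\<in>X. p $ t * axis t 1 $ l)"
    by (simp add: sum_component)
  also have "\<dots> = (\<Sum>t\<in>X. if t = l then p $ t else 0)"
    by (intro sum.cong) (auto simp: axis_def)
  also have "\<dots> = p $ l" using assms by (simp add: sum.delta' supported_on_def)
  finally show "p $ l = (\<Sum>t\<in>X. p $ t *\<^sub>R axis t 1) $ l" by simp
qed

definition form_projection :: "real^'n^'n \<Rightarrow> 'n set \<Rightarrow> real^'n \<Rightarrow> real^'n \<Rightarrow> bool" where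
  "form_projection A X v p \<longleftrightarrow>
     p \<in> supported_on X \<and> (\<forall>w\<in>supported_on X. bform A w (v - p) = 0)"

text \<open>Gram--Schmidt step: the residual \<open>r = e\<^sub>k - pe\<close> is \<open>A\<close>-orthogonal to the coordinate
  subspace of \<open>X\<close> and has \<open>k\<close>-th entry \<open>1\<close>, so correcting \<open>pv\<close> along \<open>r\<close> handles the new direction.\<close>
lemma form_projection_insert:
  fixes A :: "real^'n::finite^'n"
  assumes A: "pos_def_sym A" and k: "k \<notin> X"
    and pv: "form_projection A X v pv" and pe: "form_projection A X (axis k 1) pe"
  defines "r \<equiv> axis k 1 - pe"
  shows "form_projection A (insert k X) v (pv + (bform A r (v - pv) / qform A r) *\<^sub>R r)"
proof -
  define c where "c = bform A r (v - pv) / qform A r"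
  define p where "p = pv + c *\<^sub>R r"
  have sub: "subspace (supported_on (insert k X))"
    by (rule subspace_supported_on)
  have "r $ k = 1"
    using pe k by (simp add: form_projection_def r_def supported_on_def)
  then have "r \<noteq> 0" by auto
  then have "qform A r > 0" by (rule qform_pos[OF A])
  have r_orth: "bform A w r = 0" if "w \<in> supported_on X" for w
    using pe that by (simp add: form_projection_def r_def)
  have v_p: "bform A w (v - p) = bform A w (v - pv) - c * bform A w r" for w
    by (simp add: p_def diff_add_eq_diff_diff_swap bform_diff_right bform_scaleR_right)
  have orth_X: "bform A w (v - p) = 0" if "w \<in> supported_on X" for w
    using pv that r_orth by (simp add: v_p form_projection_def)
  have orth_r: "bform A r (v - p) = 0"
    using \<open>qform A r > 0\<close> by (simp add: v_p c_def)
  have "bform A w (v - p) = 0" if w: "w \<in> supported_on (insert k X)" for w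
  proof -
    have "w = (w - axis k (w $ k) + (w $ k) *\<^sub>R pe) + (w $ k) *\<^sub>R r"
      by (simp add: r_def vec_eq_iff axis_def algebra_simps)
    moreover have "w - axis k (w $ k) + (w $ k) *\<^sub>R pe \<in> supported_on X"
      using pe supported_on_insert_drop[OF w] subspace_supported_on
      by (auto simp: form_projection_def intro: subspace_add subspace_mul)
    ultimately show ?thesis
      using orth_X orth_r by (metis bform_add_left bform_scaleR_left add_0 mult_zero_right)
  qed
  moreover have "p \<in> supported_on (insert k X)"
    using pv pe supported_on_mono[of X "insert k X"] unfolding p_def r_def form_projection_def
    by (intro subspace_add[OF sub] subspace_mul[OF sub] subspace_diff[OF sub] axis_in_supported_on) auto
  ultimately show ?thesis
    unfolding form_projection_def p_def c_def by blast
qed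

lemma form_projection_exists:
  fixes A :: "real^'n::finite^'n"
  assumes A: "pos_def_sym A"
  shows "\<exists>p. form_projection A X v p"
proof -
  have "finite X" by simp
  then show ?thesis
  proof (induction X arbitrary: v rule: finite_induct)
    case empty
    show ?case by (auto simp: form_projection_def supported_on_empty)
  next
    case (insert k X)
    then obtain pv pe where "form_projection A X v pv" "form_projection A X (axis k 1) pe"
      by blast
    then show ?case
      using form_projection_insert[OF A insert.hyps(2)] by blast
  qed
qed

lemma qform_pythagoras:
  assumes A: "pos_def_sym A" and p: "form_projection A X v p" and y: "y \<in> supported_on X"
  shows "qform A (v - y) = qform A (v - p) + qform A (p - y)"
proof -
  have "p - y \<in> supported_on X"
    using p y subspace_supported_on by (auto simp: form_projection_def intro: subspace_diff)
  then have "bform A (p - y) (v - p) = 0"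
    using p by (simp add: form_projection_def)
  moreover have "v - y = (v - p) + (p - y)" by simp
  ultimately show ?thesis
    by (metis bform_add_left bform_add_right bform_commute[OF A] add_0 add.right_neutral)
qed

definition form_sqdist :: "real^'n^'n \<Rightarrow> real^'n \<Rightarrow> 'n set \<Rightarrow> real" where
  "form_sqdist A v X = Inf {qform A (v - y) | y. y \<in> supported_on X}"

lemma form_sqdist_eq_projection:
  assumes A: "pos_def_sym A" and p: "form_projection A X v p"
  shows "form_sqdist A v X = qform A (v - p)"
  unfolding form_sqdist_def
proof (rule cInf_eq_minimum)
  show "qform A (v - p) \<in> {qform A (v - y) | y. y \<in> supported_on X}"
    using p by (auto simp: form_projection_def)
  show "qform A (v - p) \<le> z" if "z \<in> {qform A (v - y) | y. y \<in> supported_on X}" for z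
    using that qform_pythagoras[OF A p] qform_nonneg[OF A] by force
qed

lemma form_sqdist_le:
  fixes A :: "real^'n::finite^'n"
  assumes A: "pos_def_sym A" and y: "y \<in> supported_on X"
  shows "form_sqdist A v X \<le> qform A (v - y)"
proof -
  obtain p where p: "form_projection A X v p"
    using form_projection_exists[OF A] by blast
  show ?thesis
    using qform_pythagoras[OF A p y] qform_nonneg[OF A, of "p - y"]
    by (simp add: form_sqdist_eq_projection[OF A p])
qed

lemma form_sqdist_nonneg:
  fixes A :: "real^'n::finite^'n"
  assumes A: "pos_def_sym A"
  shows "form_sqdist A v X \<ge> 0"
proof -
  obtain p where p: "form_projection A X v p"
    using form_projection_exists[OF A] by blast
  show ?thesis using qform_nonneg[OF A] by (simp add: form_sqdist_eq_projection[OF A p])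
qed

lemma form_sqdist_axis_pos:
  fixes A :: "real^'n::finite^'n"
  assumes A: "pos_def_sym A" and i: "i \<notin> X"
  shows "form_sqdist A (axis i 1) X > 0"
proof -
  obtain p where p: "form_projection A X (axis i 1) p"
    using form_projection_exists[OF A] by blast
  have "(axis i 1 - p) $ i = 1"
    using p i by (simp add: form_projection_def supported_on_def axis_def)
  then have "axis i 1 - p \<noteq> 0" by auto
  then show ?thesis using qform_pos[OF A] by (simp add: form_sqdist_eq_projection[OF A p])
qed

lemma pos_def_sym_entry_commute:
  assumes "pos_def_sym A"
  shows "A $ k $ l = A $ l $ k"
proof -
  have "transpose A $ l $ k = A $ l $ k"
    using assms by (simp add: pos_def_sym_def)
  then show ?thesis by (simp add: transpose_def)
qed

lemma bform_axis_residual: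
  fixes A :: "real^'n::finite^'n"
  assumes A: "pos_def_sym A" and p: "p \<in> supported_on X"
  shows "bform A (axis l 1) (axis i 1 - p) = A $ i $ l - (\<Sum>k\<in>X. p $ k * A $ k $ l)"
proof -
  have "bform A (axis l 1) (axis i 1 - p) = (\<Sum>m\<in>UNIV. A $ l $ m * (axis i 1 $ m - p $ m))"
    by (simp add: bform_def inner_axis' matrix_vector_mult_def)
  also have "\<dots> = (\<Sum>m\<in>UNIV. A $ l $ m * axis i 1 $ m) - (\<Sum>m\<in>UNIV. A $ l $ m * p $ m)"
    by (simp add: right_diff_distrib sum_subtractf)
  also have "(\<Sum>m\<in>UNIV. A $ l $ m * axis i 1 $ m) = (\<Sum>m\<in>UNIV. if m = i then A $ l $ m else 0)"
    by (intro sum.cong) (auto simp: axis_def)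
  also have "\<dots> = A $ l $ i"
    by simp
  also have "(\<Sum>m\<in>UNIV. A $ l $ m * p $ m) = (\<Sum>m\<in>X. A $ l $ m * p $ m)"
    using p by (intro sum.mono_neutral_right) (auto simp: supported_on_def)
  finally show ?thesis
    using pos_def_sym_entry_commute[OF A] by (simp add: mult.commute)
qed

lemma bform_axis_projection_residual:
  fixes A :: "real^'n::finite^'n"
  assumes A: "pos_def_sym A" and p: "form_projection A X (axis i 1) p" and l: "l \<in> insert i X"
  shows "bform A (axis l 1) (axis i 1 - p) = (if l = i then form_sqdist A (axis i 1) X else 0)"
proof -
  have p_supp: "p \<in> supported_on X" and orth: "\<And>w. w \<in> supported_on X \<Longrightarrow> bform A w (axis i 1 - p) = 0"
    using p by (auto simp: form_projection_def)
  show ?thesis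
  proof (cases "l = i")
    case True
    have "bform A (axis i 1) (axis i 1 - p) = qform A (axis i 1 - p) + bform A p (axis i 1 - p)"
      by (metis bform_add_left diff_add_cancel)
    then show ?thesis
      using True orth[OF p_supp] form_sqdist_eq_projection[OF A p] by simp
  next
    case False
    with l have "axis l 1 \<in> supported_on X"
      by (simp add: axis_in_supported_on)
    then show ?thesis
      using False orth by simp
  qed
qed

text \<open>Subtracting from row \<open>i\<close> the rows indexed by \<open>X\<close>, weighted by the projection \<open>p\<close> of \<open>e\<^sub>i\<close>,
  leaves the row of \<open>A (e\<^sub>i - p)\<close>, which the orthogonality of the residual reduces to a multiple
  of \<open>e\<^sub>i\<close>: this is the Schur complement formula.\<close>
lemma principal_padding_row_elimination:
  fixes A :: "real^'n::finite^'n"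
  assumes A: "pos_def_sym A" and p: "form_projection A X (axis i 1) p" and i: "i \<notin> X"
  defines "M \<equiv> principal_padding A (insert i X)"
  shows "row i M - (\<Sum>k\<in>X. p $ k *s row k M) = form_sqdist A (axis i 1) X *s axis i 1"
proof (rule vec_eq_iff[THEN iffD2, rule_format])
  fix l
  have "(row i M - (\<Sum>k\<in>X. p $ k *s row k M)) $ l = M $ i $ l - (\<Sum>k\<in>X. p $ k * M $ k $ l)"
    by (simp add: row_def sum_component)
  also have "\<dots> = (form_sqdist A (axis i 1) X *s axis i 1) $ l"
  proof (cases "l \<in> insert i X")
    case True
    then have "M $ i $ l = A $ i $ l" and "(\<Sum>k\<in>X. p $ k * M $ k $ l) = (\<Sum>k\<in>X. p $ k * A $ k $ l)"
      by (auto simp: M_def principal_padding_def intro!: sum.cong)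
    moreover have "p \<in> supported_on X"
      using p by (simp add: form_projection_def)
    ultimately show ?thesis
      using bform_axis_residual[OF A, of p X l i] bform_axis_projection_residual[OF A p True]
      by (simp add: axis_def)
  next
    case False
    then have "M $ i $ l = 0" and "(\<Sum>k\<in>X. p $ k * M $ k $ l) = 0"
      by (auto simp: M_def principal_padding_def intro!: sum.neutral)
    then show ?thesis
      using False by (simp add: axis_def)
  qed
  finally show "(row i M - (\<Sum>k\<in>X. p $ k *s row k M)) $ l =
      (form_sqdist A (axis i 1) X *s axis i 1) $ l" .
qed

lemma principal_minor_insert:
  fixes A :: "real^'n::finite^'n"
  assumes A: "pos_def_sym A" and i: "i \<notin> X"
  shows "principal_minor A (insert i X) = principal_minor A X * form_sqdist A (axis i 1) X"
proof -
  obtain p where p: "form_projection A X (axis i 1) p"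
    using form_projection_exists[OF A] by blast
  define M where "M = principal_padding A (insert i X)"
  let ?E = "\<Sum>k\<in>X. p $ k *s row k M"
  have "- ?E \<in> vec.span {row j M |j. j \<noteq> i}"
    by (intro vec.span_neg vec.span_sum vec.span_scale vec.span_base) (use i in auto)
  then have "det M = det (\<chi> k. if k = i then row i M + - ?E else row k M)"
    by (rule det_row_span[symmetric])
  also have "row i M + - ?E = form_sqdist A (axis i 1) X *s axis i 1"
    using principal_padding_row_elimination[OF A p i, folded M_def] by simp
  also have "det (\<chi> k. if k = i then form_sqdist A (axis i 1) X *s axis i 1 else row k M) =
      form_sqdist A (axis i 1) X * det (\<chi> k. if k = i then axis i 1 else row k M)"
    by (rule det_row_mul)
  also have "det (\<chi> k. if k = i then axis i 1 else row k M) = det (principal_padding A X)"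
  proof (rule det_cong_unit_row)
    show "principal_padding A X $ i = axis i 1"
      using i by (simp add: principal_padding_def axis_def vec_eq_iff)
    show "(\<chi> k. if k = i then axis i 1 else row k M) $ k $ l = principal_padding A X $ k $ l"
      if "l \<noteq> i" for k l
      using that i by (simp add: principal_padding_def axis_def M_def row_def)
  qed simp
  finally show ?thesis
    by (simp add: principal_minor_eq_det_padding M_def mult.commute)
qed

lemma principal_minor_pos:
  fixes A :: "real^'n::finite^'n"
  assumes A: "pos_def_sym A"
  shows "principal_minor A X > 0"
proof -
  have "finite X" by simp
  then show ?thesis
  proof (induction X rule: finite_induct)
    case empty
    have "principal_padding A {} = mat 1"
      by (simp add: principal_padding_def mat_def vec_eq_iff)
    then show ?case by (simp add: principal_minor_eq_det_padding)
  next
    case (insert i X)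
    then show ?case
      using principal_minor_insert[OF A] form_sqdist_axis_pos[OF A] by simp
  qed
qed

lemma form_projection_coeff_bound:
  fixes A :: "real^'n::finite^'n"
  assumes A: "pos_def_sym A" and p: "form_projection A T v p" and j: "j \<in> T"
  shows "(p $ j)\<^sup>2 * form_sqdist A (axis j 1) (T - {j}) \<le> form_sqdist A v (T - {j})"
proof -
  obtain y where y: "form_projection A (T - {j}) v y"
    using form_projection_exists[OF A] by blast
  have y_supp: "y \<in> supported_on (T - {j})"
    using y by (simp add: form_projection_def)
  have "y \<in> supported_on T"
    using y_supp supported_on_mono[of "T - {j}" T] by blast
  then have "qform A (v - y) = qform A (v - p) + qform A (p - y)"
    by (rule qform_pythagoras[OF A p])
  then have py: "qform A (p - y) \<le> form_sqdist A v (T - {j})"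
    using qform_nonneg[OF A, of "v - p"] form_sqdist_eq_projection[OF A y] by simp
  show ?thesis
  proof (cases "p $ j = 0")
    case True
    then show ?thesis using form_sqdist_nonneg[OF A] by simp
  next
    case False
    define w where "w = axis j 1 - (1 / p $ j) *\<^sub>R (p - y)"
    have "w \<in> supported_on (T - {j})"
      unfolding supported_on_def
    proof (intro CollectI allI impI)
      fix k assume k: "k \<notin> T - {j}"
      have "k \<notin> T \<Longrightarrow> p $ k = 0" and "y $ k = 0"
        using p y_supp k by (auto simp: form_projection_def supported_on_def)
      then show "w $ k = 0"
        using k j False by (cases "k = j") (auto simp: w_def axis_def)
    qed
    then have "form_sqdist A (axis j 1) (T - {j}) \<le> qform A (axis j 1 - w)"
      by (rule form_sqdist_le[OF A])
    also have "\<dots> = qform A (p - y) / (p $ j)\<^sup>2"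
      by (simp add: w_def qform_scaleR power_divide)
    finally show ?thesis
      using False py by (simp add: field_simps)
  qed
qed

text \<open>The test vector \<open>y\<close> keeps the part of \<open>p\<close> supported on \<open>S\<close>, replaces each remaining
  coordinate vector \<open>e\<^sub>j\<close> (\<open>j \<in> T - S\<close>) by its projection onto \<open>S\<close>, and adds the projection of the
  residual \<open>v - p\<close>; then \<open>v - y\<close> splits into \<open>card (T - S) + 1\<close> residuals.\<close>
lemma form_sqdist_le_via_projection:
  fixes A :: "real^'n::finite^'n"
  assumes A: "pos_def_sym A" and p: "form_projection A T v p"
  shows "form_sqdist A v S \<le>
    2 ^ card (T - S) * ((\<Sum>j\<in>T - S. (p $ j)\<^sup>2 * form_sqdist A (axis j 1) S) + form_sqdist A v T)"
proof -
  have "\<forall>j. \<exists>q. form_projection A S (axis j 1) q"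
    using form_projection_exists[OF A] by blast
  then obtain P where P: "\<And>j. form_projection A S (axis j 1) (P j)"
    by metis
  obtain pr where pr: "form_projection A S (v - p) pr"
    using form_projection_exists[OF A] by blast
  have sub: "subspace (supported_on S)"
    by (rule subspace_supported_on)
  define y where "y = (\<Sum>t\<in>T \<inter> S. p $ t *\<^sub>R axis t 1) + (\<Sum>j\<in>T - S. p $ j *\<^sub>R P j) + pr"
  have y_supp: "y \<in> supported_on S"
    using P pr unfolding y_def form_projection_def
    by (intro subspace_add[OF sub] subspace_sum[OF sub] subspace_mul[OF sub] axis_in_supported_on) auto
  have "p = (\<Sum>t\<in>T. p $ t *\<^sub>R axis t 1)"
    using p by (intro supported_on_sum_axis) (simp add: form_projection_def)
  also have "\<dots> = (\<Sum>t\<in>T \<inter> S. p $ t *\<^sub>R axis t 1) + (\<Sum>j\<in>T - S. p $ j *\<^sub>R axis j 1)"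
    by (rule sum.Int_Diff) simp
  finally have p_rest: "(\<Sum>j\<in>T - S. p $ j *\<^sub>R axis j 1) = p - (\<Sum>t\<in>T \<inter> S. p $ t *\<^sub>R axis t 1)"
    by (simp add: algebra_simps)
  have decomp: "v - y = (\<Sum>j\<in>T - S. p $ j *\<^sub>R (axis j 1 - P j)) + ((v - p) - pr)"
    by (simp add: y_def scaleR_diff_right sum_subtractf p_rest algebra_simps)
  have "form_sqdist A v S \<le> qform A (v - y)"
    by (rule form_sqdist_le[OF A y_supp])
  also have "\<dots> \<le> 2 ^ card (T - S) *
      ((\<Sum>j\<in>T - S. qform A (p $ j *\<^sub>R (axis j 1 - P j))) + qform A ((v - p) - pr))"
    unfolding decomp by (rule qform_sum_le[OF A]) simp
  also have "(\<Sum>j\<in>T - S. qform A (p $ j *\<^sub>R (axis j 1 - P j))) =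
      (\<Sum>j\<in>T - S. (p $ j)\<^sup>2 * form_sqdist A (axis j 1) S)"
    by (simp add: qform_scaleR form_sqdist_eq_projection[OF A P])
  also have "qform A ((v - p) - pr) \<le> form_sqdist A v T"
    using qform_pythagoras[OF A pr subspace_0[OF sub]] qform_nonneg[OF A, of pr]
    by (simp add: form_sqdist_eq_projection[OF A p])
  finally show ?thesis by simp
qed

lemma le_sum_imp_le_card_times_term:
  fixes f :: "'a \<Rightarrow> real"
  assumes "finite J" and "c \<ge> 0" and "\<rho> \<le> c * (sum f J + a)"
  shows "\<rho> \<le> c * (real (card J) + 1) * a \<or> (\<exists>j\<in>J. \<rho> \<le> c * (real (card J) + 1) * f j)"
proof -
  define \<mu> where "\<mu> = Max (insert a (f ` J))"
  have "\<mu> \<in> insert a (f ` J)"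
    unfolding \<mu>_def using assms(1) by (intro Max_in) auto
  moreover have "sum f J + a \<le> (real (card J) + 1) * \<mu>"
  proof -
    have "sum f J \<le> real (card J) * \<mu>"
      using assms(1) by (intro sum_bounded_above) (simp add: \<mu>_def)
    moreover have "a \<le> \<mu>"
      using assms(1) by (simp add: \<mu>_def)
    ultimately show ?thesis by (simp add: algebra_simps)
  qed
  then have "c * (sum f J + a) \<le> c * ((real (card J) + 1) * \<mu>)"
    using assms(2) by (rule mult_left_mono)
  then have "\<rho> \<le> c * (real (card J) + 1) * \<mu>"
    using assms(3) by (simp add: mult.assoc)
  ultimately show ?thesis by auto
qed

lemma form_sqdist_exchange:
  fixes A :: "real^'n::finite^'n" and S T :: "'n set"
  assumes A: "pos_def_sym A"
  defines "K \<equiv> 2 ^ card (T - S) * (real (card (T - S)) + 1)"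
  shows "form_sqdist A (axis i 1) S \<le> K * form_sqdist A (axis i 1) T \<or>
    (\<exists>j\<in>T - S. form_sqdist A (axis i 1) S * form_sqdist A (axis j 1) (T - {j}) \<le>
       K * (form_sqdist A (axis j 1) S * form_sqdist A (axis i 1) (T - {j})))"
proof -
  let ?d = "form_sqdist A"
  obtain p where p: "form_projection A T (axis i 1) p"
    using form_projection_exists[OF A] by blast
  have "?d (axis i 1) S \<le>
      2 ^ card (T - S) * ((\<Sum>j\<in>T - S. (p $ j)\<^sup>2 * ?d (axis j 1) S) + ?d (axis i 1) T)"
    by (rule form_sqdist_le_via_projection[OF A p])
  then consider "?d (axis i 1) S \<le> K * ?d (axis i 1) T"
    | j where "j \<in> T - S" "?d (axis i 1) S \<le> K * ((p $ j)\<^sup>2 * ?d (axis j 1) S)"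
    using le_sum_imp_le_card_times_term[of "T - S" "2 ^ card (T - S)"] unfolding K_def by fastforce
  then show ?thesis
  proof cases
    case (2 j)
    have d_nonneg: "\<And>v X. ?d v X \<ge> 0"
      by (rule form_sqdist_nonneg[OF A])
    have "?d (axis i 1) S * ?d (axis j 1) (T - {j}) \<le>
        K * ((p $ j)\<^sup>2 * ?d (axis j 1) S) * ?d (axis j 1) (T - {j})"
      using 2 d_nonneg by (intro mult_right_mono) simp_all
    also have "\<dots> = K * ?d (axis j 1) S * ((p $ j)\<^sup>2 * ?d (axis j 1) (T - {j}))"
      by (simp add: algebra_simps)
    also have "\<dots> \<le> K * ?d (axis j 1) S * ?d (axis i 1) (T - {j})"
      using form_projection_coeff_bound[OF A p] 2 d_nonneg
      by (intro mult_left_mono mult_nonneg_nonneg) (simp_all add: K_def)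
    finally show ?thesis
      using 2 by (auto simp: mult.assoc)
  qed simp
qed

lemma principal_minor_exchange:
  fixes A :: "real^'n::finite^'n"
  assumes A: "pos_def_sym A" and i: "i \<in> S" "i \<notin> T"
  defines "K \<equiv> 2 ^ card (T - S) * (real (card (T - S)) + 1)"
  shows "principal_minor A S * principal_minor A T \<le>
           K * (principal_minor A (S - {i}) * principal_minor A (insert i T)) \<or>
         (\<exists>j\<in>T - S. principal_minor A S * principal_minor A T \<le>
           K * (principal_minor A (insert j (S - {i})) * principal_minor A (insert i (T - {j}))))"
proof -
  let ?a = "principal_minor A" and ?d = "form_sqdist A"
  define S0 where "S0 = S - {i}"
  have S: "S = insert i S0" "i \<notin> S0" and TS: "T - S0 = T - S"
    using i by (auto simp: S0_def)
  have a_nonneg: "\<And>X. ?a X \<ge> 0"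
    using principal_minor_pos[OF A] by (simp add: less_imp_le)
  have aS: "?a S = ?a S0 * ?d (axis i 1) S0"
    unfolding S(1) by (rule principal_minor_insert[OF A S(2)])
  consider "?d (axis i 1) S0 \<le> K * ?d (axis i 1) T"
    | j where "j \<in> T - S" "?d (axis i 1) S0 * ?d (axis j 1) (T - {j}) \<le>
        K * (?d (axis j 1) S0 * ?d (axis i 1) (T - {j}))"
    using form_sqdist_exchange[OF A, where S = S0 and T = T and i = i] unfolding TS K_def by blast
  then show ?thesis
  proof cases
    case 1
    have "?a S * ?a T = ?a S0 * ?a T * ?d (axis i 1) S0"
      by (simp add: aS)
    also have "\<dots> \<le> ?a S0 * ?a T * (K * ?d (axis i 1) T)"
      using 1 a_nonneg by (intro mult_left_mono mult_nonneg_nonneg) simp_all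
    also have "\<dots> = K * (?a S0 * ?a (insert i T))"
      by (simp add: principal_minor_insert[OF A i(2)])
    finally show ?thesis by (simp add: S0_def)
  next
    case (2 j)
    then have "j \<notin> S0" "i \<notin> T - {j}" "T = insert j (T - {j})"
      using i by (auto simp: S0_def)
    then have aT: "?a T = ?a (T - {j}) * ?d (axis j 1) (T - {j})"
      by (metis principal_minor_insert[OF A] Diff_iff singletonI)
    have "?a S * ?a T = ?a S0 * ?a (T - {j}) * (?d (axis i 1) S0 * ?d (axis j 1) (T - {j}))"
      by (simp add: aS aT algebra_simps)
    also have "\<dots> \<le> ?a S0 * ?a (T - {j}) * (K * (?d (axis j 1) S0 * ?d (axis i 1) (T - {j})))"
      using 2 a_nonneg by (intro mult_left_mono mult_nonneg_nonneg) simp_all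
    also have "\<dots> = K * (?a (insert j S0) * ?a (insert i (T - {j})))"
      by (simp add: principal_minor_insert[OF A \<open>j \<notin> S0\<close>]
          principal_minor_insert[OF A \<open>i \<notin> T - {j}\<close>] algebra_simps)
    finally show ?thesis
      using 2 by (auto simp: S0_def)
  qed
qed

lemma trop_le_of_product_bounds:
  fixes X :: "('a::finite \<Rightarrow> real) set"
  assumes F: "F \<in> trop X" and pos: "\<And>x a. x \<in> X \<Longrightarrow> x a > 0"
    and J: "finite J" and K: "K > 0"
    and bound: "\<And>x. x \<in> X \<Longrightarrow> \<exists>(U, V)\<in>J. x S * x T \<le> K * (x U * x V)"
  shows "\<exists>(U, V)\<in>J. F S + F T \<le> F U + F V"
proof (rule ccontr)
  assume "\<not> ?thesis"
  then have gap: "F U + F V < F S + F T" if "(U, V) \<in> J" for U V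
    using that by auto
  define \<gamma> where "\<gamma> = Min (insert 1 ((\<lambda>(U, V). F S + F T - (F U + F V)) ` J))"
  have "\<gamma> > 0"
    using J gap by (auto simp: \<gamma>_def)
  have \<gamma>_le: "\<gamma> \<le> F S + F T - (F U + F V)" if "(U, V) \<in> J" for U V
    using J that unfolding \<gamma>_def by (intro Min_le) auto
  define \<epsilon> where "\<epsilon> = \<gamma> / 5"
  have "\<epsilon> > 0"
    using \<open>\<gamma> > 0\<close> by (simp add: \<epsilon>_def)
  have "((\<lambda>t. log t K) \<longlongrightarrow> 0) at_top"
    unfolding log_def
    by (intro tendsto_divide_0[OF tendsto_const] filterlim_at_top_imp_at_infinity ln_at_top)
  then have "eventually (\<lambda>t. 1 < t \<and> log t K < \<epsilon>) at_top"
    using \<open>\<epsilon> > 0\<close> by (intro eventually_conj eventually_gt_at_top) (simp add: order_tendstoD)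
  then obtain t0 where t0: "\<And>t. t \<ge> t0 \<Longrightarrow> 1 < t \<and> log t K < \<epsilon>"
    by (auto simp: eventually_at_top_linorder)
  obtain t x where "t > t0" "x \<in> X" and close: "\<And>a. \<bar>log t (x a) - F a\<bar> < \<epsilon>"
    using F \<open>\<epsilon> > 0\<close> unfolding trop_def by blast
  have t: "1 < t" "log t K < \<epsilon>"
    using t0 \<open>t > t0\<close> by auto
  obtain U V where UV: "(U, V) \<in> J" and "x S * x T \<le> K * (x U * x V)"
    using bound[OF \<open>x \<in> X\<close>] by blast
  then have "log t (x S * x T) \<le> log t (K * (x U * x V))"
    using t K pos[OF \<open>x \<in> X\<close>] by simp
  then have "log t (x S) + log t (x T) \<le> log t K + (log t (x U) + log t (x V))"
    using K pos[OF \<open>x \<in> X\<close>] by (simp add: log_mult_pos)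
  then show False
    using close[of S] close[of T] close[of U] close[of V] t \<gamma>_le[OF UV]
    unfolding \<epsilon>_def by linarith
qed

theorem proposition2p1:
  shows "trop (PM_plus :: ('n::finite set \<Rightarrow> real) set) \<subseteq> {F. M_natural_concave F}"
proof
  fix F :: "'n set \<Rightarrow> real"
  assume F: "F \<in> trop PM_plus"
  show "F \<in> {F. M_natural_concave F}"
    unfolding mem_Collect_eq M_natural_concave_def
  proof (intro allI ballI)
    fix S T :: "'n set" and i
    assume i: "i \<in> S - T"
    define J where "J = insert (S - {i}, T \<union> {i}) ((\<lambda>j. (S - {i} \<union> {j}, T - {j} \<union> {i})) ` (T - S))"
    define K :: real where "K = 2 ^ card (T - S) * (real (card (T - S)) + 1)"
    have "\<exists>(U, V)\<in>J. F S + F T \<le> F U + F V"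
    proof (rule trop_le_of_product_bounds[OF F])
      show "\<And>x X. x \<in> PM_plus \<Longrightarrow> x X > 0"
        using principal_minor_pos by (auto simp: PM_plus_def)
      fix x :: "'n set \<Rightarrow> real"
      assume "x \<in> PM_plus"
      then obtain A where "pos_def_sym A" and "x = principal_minor A"
        by (auto simp: PM_plus_def)
      then show "\<exists>(U, V)\<in>J. x S * x T \<le> K * (x U * x V)"
        using principal_minor_exchange[of A i S T] i by (auto simp: J_def K_def)
    qed (auto simp: J_def K_def)
    then show "F S + F T \<le> F (S - {i}) + F (T \<union> {i}) \<or>
        (\<exists>j\<in>T - S. F S + F T \<le> F (S - {i} \<union> {j}) + F (T - {j} \<union> {i}))"
      by (auto simp: J_def)
  qed
qed

end
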